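(* Under the setting and assumptions in the context, if $\Pr(Y(0)=1)>0$, then $$APCE_{AH}=\frac{\Pr(R=0,Y=1\mid Z=0)-\Pr(R=0,Y=1\mid Z=1)}{\Pr(Y(0)=1)}.$$
   Context: Units are drawn from a population (a probability space). Each unit has a binary assignment $Z\in\{0,1\}$ with $0<\Pr(Z=1)<1$, binary potential recommendations $R(0),R(1)\in\{0,1\}$, and binary potential outcomes $Y(0),Y(1)\in\{0,1\}$ indexed by the recommendation only (exclusion restriction). Observed quantities are $R=R(Z)$ and $Y=Y(R(Z))$. Assumptions: (Randomization) $Z$ is independent of $(R(0),R(1),Y(0),Y(1))$; (Monotonicity) $Y(1)\ge Y(0)$ almost surely. Principal strata: Always Low $AL=\{Y(0)=Y(1)=0\}$, Always High $AH=\{Y(0)=Y(1)=1\}$, Helpable $H=\{Y(0)=0,Y(1)=1\}$. For a stratum $J$ with positive probability, $APCE_J=E[R(1)-R(0)\mid J]$. *)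

theory Defs
  imports "HOL-Probability.Probability"
begin

text \<open>Binary variables are modelled as boolean-valued random variables (True = 1).
  Elementary conditional probability of event A given event B (with Pr(B) > 0):\<close>

definition cond_prob :: "'a measure \<Rightarrow> 'a set \<Rightarrow> 'a set \<Rightarrow> real" where
  "cond_prob M A B = measure M (A \<inter> B) / measure M B"

text \<open>Principal causal effect on a stratum J (an event):
  APCE_J = E[R(1) - R(0) | J] = E[(R(1) - R(0)) 1_J] / Pr(J).\<close>

definition APCE :: "'a measure \<Rightarrow> ('a \<Rightarrow> bool) \<Rightarrow> ('a \<Rightarrow> bool) \<Rightarrow> 'a set \<Rightarrow> real" where
  "APCE M R0 R1 J =
     (\<integral>\<omega>. indicator J \<omega> * ((if R1 \<omega> then 1 else 0) - (if R0 \<omega> then 1 else 0)) \<partial>M)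
     / measure M J"

text \<open>Independence of two random variables with possibly different codomains
  (same formula as the library lemma prob_space.indep_var_eq, which requires equal codomain types).\<close>
definition indep_rv :: "'a measure \<Rightarrow> 'b measure \<Rightarrow> ('a \<Rightarrow> 'b) \<Rightarrow> 'c measure \<Rightarrow> ('a \<Rightarrow> 'c) \<Rightarrow> bool" where
  "indep_rv M S X T Y \<longleftrightarrow>
    X \<in> M \<rightarrow>\<^sub>M S \<and> Y \<in> M \<rightarrow>\<^sub>M T \<and>
    prob_space.indep_set M
      (sigma_sets (space M) { X -` A \<inter> space M | A. A \<in> sets S})
      (sigma_sets (space M) { Y -` A \<inter> space M | A. A \<in> sets T})"

definition AH_stratum :: "'a measure \<Rightarrow> ('a \<Rightarrow> bool) \<Rightarrow> ('a \<Rightarrow> bool) \<Rightarrow> 'a set" where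
  "AH_stratum M Y0 Y1 = {\<omega> \<in> space M. Y0 \<omega> \<and> Y1 \<omega>}"

end

theory Submission
  imports Defs
begin

text \<open>On the arm \<open>Z = z\<close> the observed event \<open>R = 0, Y = 1\<close> is \<open>R(z) = 0, Y(0) = 1\<close>,
  because \<open>R = 0\<close> selects the potential outcome \<open>Y(0)\<close>. Randomization turns the two
  conditional probabilities into \<open>Pr(R(0) = 0, Y(0) = 1)\<close> and \<open>Pr(R(1) = 0, Y(0) = 1)\<close>,
  whose difference is \<open>E[(R(1) - R(0)) 1{Y(0) = 1}]\<close>. By monotonicity the stratum \<open>AH\<close>
  coincides almost surely with \<open>{Y(0) = 1}\<close>, so this is \<open>APCE\<^sub>A\<^sub>H Pr(Y(0) = 1)\<close>.\<close>

lemma (in prob_space) cond_prob_indep_rv: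
  assumes indep: "indep_rv M S Z T X"
    and P: "Collect P \<in> sets S" and Q: "Collect Q \<in> sets T"
    and pos: "prob {\<omega> \<in> space M. P (Z \<omega>)} \<noteq> 0"
    and arm: "\<And>\<omega>. \<omega> \<in> space M \<Longrightarrow> P (Z \<omega>) \<Longrightarrow> \<omega> \<in> E \<longleftrightarrow> Q (X \<omega>)"
  shows "cond_prob M E {\<omega> \<in> space M. P (Z \<omega>)} = prob {\<omega> \<in> space M. Q (X \<omega>)}"
proof -
  have ZP: "{\<omega> \<in> space M. P (Z \<omega>)} = Z -` Collect P \<inter> space M" by auto
  have XQ: "{\<omega> \<in> space M. Q (X \<omega>)} = X -` Collect Q \<inter> space M" by auto
  have ind: "indep_set (sigma_sets (space M) {Z -` A \<inter> space M |A. A \<in> sets S})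
      (sigma_sets (space M) {X -` B \<inter> space M |B. B \<in> sets T})"
    using indep unfolding indep_rv_def by blast
  have "prob (E \<inter> {\<omega> \<in> space M. P (Z \<omega>)})
      = prob ({\<omega> \<in> space M. P (Z \<omega>)} \<inter> {\<omega> \<in> space M. Q (X \<omega>)})"
    using arm by (intro arg_cong[where f = prob]) blast
  also have "\<dots> = prob {\<omega> \<in> space M. P (Z \<omega>)} * prob {\<omega> \<in> space M. Q (X \<omega>)}"
    unfolding ZP XQ using P Q by (intro indep_setD[OF ind] sigma_sets.Basic) blast+
  finally show ?thesis
    using pos unfolding cond_prob_def by simp
qed

lemma (in prob_space) APCE_eq_prob_diff:
  assumes J: "J \<in> events"
    and R0: "R0 \<in> M \<rightarrow>\<^sub>M count_space UNIV" and R1: "R1 \<in> M \<rightarrow>\<^sub>M count_space UNIV"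
  shows "APCE M R0 R1 J =
    (prob (J \<inter> {\<omega> \<in> space M. R1 \<omega>}) - prob (J \<inter> {\<omega> \<in> space M. R0 \<omega>})) / prob J"
proof -
  let ?J0 = "J \<inter> {\<omega> \<in> space M. R0 \<omega>}" and ?J1 = "J \<inter> {\<omega> \<in> space M. R1 \<omega>}"
  have ev: "?J0 \<in> events" "?J1 \<in> events"
    using J R0 R1 by measurable
  have "(\<integral>\<omega>. indicator J \<omega> * ((if R1 \<omega> then 1 else 0) - (if R0 \<omega> then 1 else 0)) \<partial>M)
      = (\<integral>\<omega>. indicator ?J1 \<omega> - indicator ?J0 \<omega> \<partial>M :: real)"
    using sets.sets_into_space[OF J] by (intro Bochner_Integration.integral_cong) (auto split: split_indicator)
  also have "\<dots> = prob ?J1 - prob ?J0"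
    using ev by (simp add: emeasure_eq_measure Int_absorb2)
  finally show ?thesis
    unfolding APCE_def by simp
qed

lemma (in prob_space) APCE_cong_AE:
  assumes J: "J \<in> events" and J': "J' \<in> events"
    and eq: "AE \<omega> in M. \<omega> \<in> J \<longleftrightarrow> \<omega> \<in> J'"
    and R0: "R0 \<in> M \<rightarrow>\<^sub>M count_space UNIV" and R1: "R1 \<in> M \<rightarrow>\<^sub>M count_space UNIV"
  shows "APCE M R0 R1 J = APCE M R0 R1 J'"
proof -
  have "prob (J \<inter> {\<omega> \<in> space M. R \<omega>}) = prob (J' \<inter> {\<omega> \<in> space M. R \<omega>})"
    if "R \<in> M \<rightarrow>\<^sub>M count_space UNIV" for R
    using eq J J' that by (intro measure_eq_AE) (auto elim: AE_mp, measurable)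
  moreover have "prob J = prob J'"
    using eq J J' by (rule measure_eq_AE)
  ultimately show ?thesis
    using J J' R0 R1 by (simp add: APCE_eq_prob_diff)
qed

lemma AH_stratum_AE_eq:
  assumes "AE \<omega> in M. Y0 \<omega> \<longrightarrow> Y1 \<omega>"
  shows "AE \<omega> in M. \<omega> \<in> AH_stratum M Y0 Y1 \<longleftrightarrow> \<omega> \<in> {\<omega> \<in> space M. Y0 \<omega>}"
  using assms by (rule AE_mp) (auto simp: AH_stratum_def AE_space)

theorem mainTheorem3:
  fixes M :: "'a measure"
    and Z R0 R1 Y0 Y1 :: "'a \<Rightarrow> bool"
  assumes P: "prob_space M"
    and meas_Z: "Z \<in> M \<rightarrow>\<^sub>M count_space UNIV"
    and meas_R0: "R0 \<in> M \<rightarrow>\<^sub>M count_space UNIV"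
    and meas_R1: "R1 \<in> M \<rightarrow>\<^sub>M count_space UNIV"
    and meas_Y0: "Y0 \<in> M \<rightarrow>\<^sub>M count_space UNIV"
    and meas_Y1: "Y1 \<in> M \<rightarrow>\<^sub>M count_space UNIV"
    and Z_pos: "0 < measure M {\<omega> \<in> space M. Z \<omega>}"
    and Z_lt1: "measure M {\<omega> \<in> space M. Z \<omega>} < 1"
    and randomization: "indep_rv M (count_space UNIV) Z (count_space (UNIV :: (bool \<times> bool \<times> bool \<times> bool) set))
                          (\<lambda>\<omega>. (R0 \<omega>, R1 \<omega>, Y0 \<omega>, Y1 \<omega>))"
    and monotonicity: "AE \<omega> in M. Y0 \<omega> \<longrightarrow> Y1 \<omega>"
    and Y0_pos: "0 < measure M {\<omega> \<in> space M. Y0 \<omega>}"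
  shows "APCE M R0 R1 (AH_stratum M Y0 Y1) =
           (cond_prob M {\<omega> \<in> space M. \<not> (if Z \<omega> then R1 \<omega> else R0 \<omega>) \<and>
                                      (if (if Z \<omega> then R1 \<omega> else R0 \<omega>) then Y1 \<omega> else Y0 \<omega>)}
                        {\<omega> \<in> space M. \<not> Z \<omega>}
          - cond_prob M {\<omega> \<in> space M. \<not> (if Z \<omega> then R1 \<omega> else R0 \<omega>) \<and>
                                      (if (if Z \<omega> then R1 \<omega> else R0 \<omega>) then Y1 \<omega> else Y0 \<omega>)}
                        {\<omega> \<in> space M. Z \<omega>})
          / measure M {\<omega> \<in> space M. Y0 \<omega>}"
proof -
  interpret prob_space M by (rule P)
  let ?Y0 = "{\<omega> \<in> space M. Y0 \<omega>}"
  let ?Obs = "{\<omega> \<in> space M. \<not> (if Z \<omega> then R1 \<omega> else R0 \<omega>) \<and>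
    (if (if Z \<omega> then R1 \<omega> else R0 \<omega>) then Y1 \<omega> else Y0 \<omega>)}"
  have "prob {\<omega> \<in> space M. \<not> Z \<omega>} = prob (space M - {\<omega> \<in> space M. Z \<omega>})"
    by (intro arg_cong[where f = prob]) blast
  also have "\<dots> = 1 - prob {\<omega> \<in> space M. Z \<omega>}"
    using meas_Z by (intro prob_compl) measurable
  finally have "cond_prob M ?Obs {\<omega> \<in> space M. \<not> Z \<omega>} = prob (?Y0 - {\<omega> \<in> space M. R0 \<omega>})"
    using Z_lt1 by (subst cond_prob_indep_rv[OF randomization, where Q = "\<lambda>(r0, _, y0, _). \<not> r0 \<and> y0"])
      (auto intro: arg_cong[where f = prob])
  moreover have "cond_prob M ?Obs {\<omega> \<in> space M. Z \<omega>} = prob (?Y0 - {\<omega> \<in> space M. R1 \<omega>})"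
    using Z_pos by (subst cond_prob_indep_rv[OF randomization, where Q = "\<lambda>(_, r1, y0, _). \<not> r1 \<and> y0"])
      (auto intro: arg_cong[where f = prob])
  moreover have "APCE M R0 R1 (AH_stratum M Y0 Y1) = APCE M R0 R1 ?Y0"
    using AH_stratum_AE_eq[OF monotonicity] meas_Y0 meas_Y1 meas_R0 meas_R1
    by (intro APCE_cong_AE) (auto simp: AH_stratum_def)
  ultimately show ?thesis
    using meas_Y0 meas_R0 meas_R1
    by (simp add: APCE_eq_prob_diff finite_measure_Diff')
qed

end
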